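(* Let $r$ be a rational number with $0<r<1$ and $n\ge2$ an integer. The symmetrized subset $R$ of the free group $F(a,b)$ generated by $u_r^n$ satisfies the small cancellation conditions $C(4n)$ and $T(4)$.
   Context: Words $u_r$: for $r=q/p$ with $0<r\le1$, $p,q$ coprime positive integers, put $\epsilon_i=(-1)^{\lfloor iq/p\rfloor}$; if $p$ is odd, $u_r=a\hat u_r b^{(-1)^q}\hat u_r^{-1}$ with $\hat u_r=b^{\epsilon_1}a^{\epsilon_2}\cdots b^{\epsilon_{p-2}}a^{\epsilon_{p-1}}$; if $p$ is even, $u_r=a\hat u_r a^{-1}\hat u_r^{-1}$ with $\hat u_r=b^{\epsilon_1}a^{\epsilon_2}\cdots a^{\epsilon_{p-2}}b^{\epsilon_{p-1}}$. The symmetrized subset generated by a cyclically reduced word $u$ is the set of all cyclic permutations of $u$ and $u^{-1}$. A nonempty word $b$ is a piece if there exist distinct $w_1,w_2\in R$ with $w_1\equiv bc_1$, $w_2\equiv bc_2$ ($\equiv$ = letter-by-letter equality). Condition $C(p)$: if $w\in R$ is a product $w\equiv w_1\cdots w_t$ of $t$ pieces, then $t\ge p$. Condition $T(q)$: for $w_1,\dots,w_t\in R$ with no successive elements $w_i,w_{i+1}$ (indices mod $t$) an inverse pair, if $t<q$ then at least one of the products $w_1w_2,\dots,w_{t-1}w_t,w_tw_1$ is freely reduced without cancellation. *)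

theory Defs
  imports Complex_Main
begin

(* Free group F(a,b): a word is a list of letters; a letter is a generator with
   an exponent sign (True = exponent +1, False = exponent -1). *)
datatype gen = Ga | Gb

type_synonym letter = "gen \<times> bool"
type_synonym word = "letter list"

definition inv_letter :: "letter \<Rightarrow> letter" where
  "inv_letter x = (fst x, \<not> snd x)"

definition inv_word :: "word \<Rightarrow> word" where
  "inv_word w = rev (map inv_letter w)"

definition word_pow :: "word \<Rightarrow> nat \<Rightarrow> word" where
  "word_pow w n = concat (replicate n w)"

definition r_num :: "rat \<Rightarrow> int" where "r_num r = fst (quotient_of r)"
definition r_den :: "rat \<Rightarrow> int" where "r_den r = snd (quotient_of r)"

(* epsilon_i = (-1)^floor(i q / p); True encodes +1 *)
definition eps :: "rat \<Rightarrow> nat \<Rightarrow> bool" where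
  "eps r i = even ((int i * r_num r) div r_den r)"

(* hat u_r = b^{eps_1} a^{eps_2} b^{eps_3} ... (letters i = 1 .. p-1,
   b at odd positions, a at even positions), in both parity cases *)
definition u_hat :: "rat \<Rightarrow> word" where
  "u_hat r = map (\<lambda>i. (if odd i then Gb else Ga, eps r i)) [1..<nat (r_den r)]"

definition u_word :: "rat \<Rightarrow> word" where
  "u_word r =
     (if odd (r_den r)
      then [(Ga, True)] @ u_hat r @ [(Gb, even (r_num r))] @ inv_word (u_hat r)
      else [(Ga, True)] @ u_hat r @ [(Ga, False)] @ inv_word (u_hat r))"

definition symmetrized :: "word \<Rightarrow> word set" where
  "symmetrized u = {rotate k u | k. True} \<union> {rotate k (inv_word u) | k. True}"

definition piece :: "word set \<Rightarrow> word \<Rightarrow> bool" where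
  "piece R x \<longleftrightarrow> x \<noteq> [] \<and>
     (\<exists>w1 w2 c1 c2. w1 \<in> R \<and> w2 \<in> R \<and> w1 \<noteq> w2 \<and> w1 = x @ c1 \<and> w2 = x @ c2)"

definition C_cond :: "nat \<Rightarrow> word set \<Rightarrow> bool" where
  "C_cond p R \<longleftrightarrow>
     (\<forall>w \<in> R. \<forall>ps. w = concat ps \<and> (\<forall>x \<in> set ps. piece R x) \<longrightarrow> length ps \<ge> p)"

definition no_cancel :: "word \<Rightarrow> word \<Rightarrow> bool" where
  "no_cancel x y \<longleftrightarrow> x = [] \<or> y = [] \<or> last x \<noteq> inv_letter (hd y)"

(* T(q), with the standard range 3 <= t < q (Lyndon--Schupp) *)
definition T_cond :: "nat \<Rightarrow> word set \<Rightarrow> bool" where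
  "T_cond q R \<longleftrightarrow>
     (\<forall>ws :: word list. set ws \<subseteq> R \<and> 3 \<le> length ws \<and> length ws < q \<and>
        (\<forall>i < length ws. ws ! ((i + 1) mod length ws) \<noteq> inv_word (ws ! i))
      \<longrightarrow> (\<exists>i < length ws. no_cancel (ws ! i) (ws ! ((i + 1) mod length ws))))"

end

theory Submission
  imports Defs
begin

(* Write r = q/P in lowest terms, so 0 < q < P.  Letter k (k = 0, 1, ...) of u_r^n is
   a or b according to the parity of k, with exponent (-1)^floor(kq/P): u_r^n is the
   word of length 2Pn read off the line y = kq/P ("sturm_word").  Shifting the
   parity offset e and the phase theta (letter k uses parity of k + e and
   floor((kq + theta)/P)) describes every cyclic permutation of u_r^n and of its
   inverse, so the symmetrized set R consists of such words.

   Call k a marker if (kq + theta) mod P is 0 or P - 1.  Markers are rigid: if two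
   words of the family agree on an interval containing two markers of one of them,
   they are equal.  So a piece (a common prefix of two distinct relators) contains at
   most one marker; as every block of P consecutive positions contains two markers,
   a relator of length 2Pn is not a product of fewer than 4n pieces: C(4n).
   T(4) holds because each relator begins and ends with different generators.
   (The argument only uses n >= 1.) *)

(* Floor of a negated quotient, in the form needed to read a word backwards. *)
lemma floor_neg:
  fixes x p :: int
  assumes "0 < p"
  shows "(- x) div p = - ((x - 1) div p) - 1"
proof -
  define a where "a = (x - 1) div p"
  define b where "b = (x - 1) mod p"
  have b: "0 \<le> b" "b < p" unfolding b_def using assms by auto
  have "- x = (p - 1 - b) + p * (- a - 1)"
    using div_mult_mod_eq[of "x - 1" p] unfolding a_def b_def by (simp add: algebra_simps)
  then have "(- x) div p = - a - 1 + (p - 1 - b) div p" using assms by (simp only: div_mult_self2)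
  then show ?thesis using b unfolding a_def by (simp add: div_pos_pos_trivial)
qed

lemma floor_step:
  fixes a p q :: int
  assumes "0 < p" "0 \<le> q" "q < p"
  shows "a div p \<le> (a + q) div p \<and> (a + q) div p \<le> a div p + 1"
proof
  show "a div p \<le> (a + q) div p" using assms by (simp add: zdiv_mono1)
  have "(a + q) div p \<le> (a + p) div p" by (rule zdiv_mono1) (use assms in auto)
  then show "(a + q) div p \<le> a div p + 1" using assms by simp
qed

lemma residue_nonzero:
  assumes "coprime q (int P)" "0 < i" "i < P"
  shows "(int i * q) mod int P \<noteq> 0"
proof
  assume "(int i * q) mod int P = 0"
  then have "int P dvd int i" using assms(1) by (auto simp: coprime_commute coprime_dvd_mult_left_iff)
  then show False using assms(2,3) by (auto dest: dvd_imp_le)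
qed

lemma residue_in_window:
  assumes "coprime q (int P)" "0 < P" "0 \<le> c" "c < int P"
  shows "\<exists>k. a \<le> k \<and> k < a + P \<and> (int k * q + \<theta>) mod int P = c"
proof -
  obtain u v where uv: "u * q + v * int P = 1"
    using bezout_int[of q "int P"] assms(1) by (auto simp: coprime_iff_gcd_eq_1)
  define A where "A = c - \<theta> - int a * q"
  define t where "t = (A * u) mod int P"
  have t: "0 \<le> t" "t < int P" unfolding t_def using assms(2) by auto
  have t_eq: "t = A * u - int P * (A * u div int P)" unfolding t_def by (simp add: minus_mult_div_eq_mod)
  define k where "k = a + nat t"
  have "int k = int a + t" unfolding k_def using t by simp
  then have "int k * q + \<theta> - c = int P * (- A * v - (A * u div int P) * q)"
    using t_eq uv unfolding A_def by algebra
  then have "(int k * q + \<theta>) mod int P = c mod int P" by (simp add: mod_eq_dvd_iff)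
  then have "(int k * q + \<theta>) mod int P = c" using assms(3,4) by simp
  moreover have "a \<le> k" "k < a + P" using t unfolding k_def by auto
  ultimately show ?thesis by blast
qed

(* Consecutive repetitions of a residue are at least P apart, so every other residue
   occurs strictly between two positions carrying the same residue. *)
lemma residue_between:
  assumes "coprime q (int P)" "0 < P" "k1 < k2"
    and same: "(int k1 * q + \<theta>) mod int P = (int k2 * q + \<theta>) mod int P"
    and "0 \<le> c" "c < int P" "c \<noteq> (int k1 * q + \<theta>) mod int P"
  shows "\<exists>k. k1 < k \<and> k < k2 \<and> (int k * q + \<theta>) mod int P = c"
proof -
  have "int P dvd (int k2 * q + \<theta>) - (int k1 * q + \<theta>)"
    using same[symmetric] by (simp add: mod_eq_dvd_iff)
  also have "(int k2 * q + \<theta>) - (int k1 * q + \<theta>) = int (k2 - k1) * q"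
    using assms(3) by (simp add: of_nat_diff algebra_simps)
  finally have "int P dvd int (k2 - k1) * q" .
  then have "int P dvd int (k2 - k1)" using assms(1) by (auto simp: coprime_commute coprime_dvd_mult_left_iff)
  then have "P dvd k2 - k1" by (simp only: of_nat_dvd_iff)
  then have "P \<le> k2 - k1" using assms(3) by (auto dest: dvd_imp_le)
  obtain k where k: "k1 \<le> k" "k < k1 + P" "(int k * q + \<theta>) mod int P = c"
    using residue_in_window[OF assms(1,2,5,6)] by blast
  then have "k \<noteq> k1" using assms(7) by auto
  then show ?thesis using k \<open>P \<le> k2 - k1\<close> by (intro exI[of _ k]) auto
qed

lemma odd_complement: "odd (2 * m - b - 1) \<longleftrightarrow> even (b :: int)"
  by presburger

definition sturm_letter :: "nat \<Rightarrow> int \<Rightarrow> nat \<Rightarrow> int \<Rightarrow> nat \<Rightarrow> letter" where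
  "sturm_letter P q e \<theta> k = (if even (k + e) then Ga else Gb, even ((int k * q + \<theta>) div int P))"

definition sturm_word :: "nat \<Rightarrow> int \<Rightarrow> nat \<Rightarrow> nat \<Rightarrow> int \<Rightarrow> word" where
  "sturm_word P q N e \<theta> = map (sturm_letter P q e \<theta>) [0..<N]"

lemma sturm_letter_shift:
  "sturm_letter P q e \<theta> (k + m) = sturm_letter P q (e + m) (\<theta> + int m * q) k"
  unfolding sturm_letter_def by (simp add: algebra_simps)

lemma sturm_letter_cong:
  assumes "0 < P" "even e1 = even e2" "\<theta>1 mod (2 * int P) = \<theta>2 mod (2 * int P)"
  shows "sturm_letter P q e1 \<theta>1 = sturm_letter P q e2 \<theta>2"
proof
  fix k
  obtain t where "\<theta>2 - \<theta>1 = 2 * int P * t"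
    using assms(3) mod_eq_dvd_iff[of \<theta>2] by (metis dvdE)
  then have "int k * q + \<theta>2 = (int k * q + \<theta>1) + int P * (2 * t)" by (simp add: algebra_simps)
  then have "(int k * q + \<theta>2) div int P = 2 * t + (int k * q + \<theta>1) div int P"
    using assms(1) by (simp only: div_mult_self2 of_nat_eq_0_iff)
  then show "sturm_letter P q e1 \<theta>1 k = sturm_letter P q e2 \<theta>2 k"
    unfolding sturm_letter_def using assms(2) by simp
qed

lemma sturm_letter_period:
  assumes "0 < P"
  shows "sturm_letter P q e \<theta> (k + 2 * P * t) = sturm_letter P q e \<theta> k"
proof -
  have "sturm_letter P q (e + 2 * P * t) (\<theta> + int (2 * P * t) * q) = sturm_letter P q e \<theta>"
  proof (rule sturm_letter_cong[OF assms])
    have "\<theta> + int (2 * P * t) * q = \<theta> + (int t * q) * (2 * int P)" by simp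
    then show "(\<theta> + int (2 * P * t) * q) mod (2 * int P) = \<theta> mod (2 * int P)"
      by (simp only: mod_mult_self1)
  qed simp
  then show ?thesis by (simp only: sturm_letter_shift)
qed

lemma rotate_periodic:
  fixes f :: "nat \<Rightarrow> 'a"
  assumes per: "\<And>k. f (k + N) = f k"
  shows "rotate m (map f [0..<N]) = map (\<lambda>k. f (k + m)) [0..<N]"
proof (rule nth_equalityI)
  have shift: "f (a + N * t) = f a" for a t
  proof (induction t)
    case (Suc t)
    have "a + N * Suc t = (a + N * t) + N" by simp
    then show ?case using Suc per by metis
  qed simp
  have reduce: "f (a mod N) = f a" for a
    using shift[of "a mod N" "a div N"] by simp
  fix i assume "i < length (rotate m (map f [0..<N]))"
  then show "rotate m (map f [0..<N]) ! i = map (\<lambda>k. f (k + m)) [0..<N] ! i"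
    using reduce[of "m + i"] by (simp add: nth_rotate add.commute)
qed simp

lemma rotate_sturm_word:
  assumes "0 < P"
  shows "rotate m (sturm_word P q (2 * P * n) e \<theta>) = sturm_word P q (2 * P * n) (e + m) (\<theta> + int m * q)"
proof -
  have "sturm_letter P q e \<theta> (k + 2 * P * n) = sturm_letter P q e \<theta> k" for k
    by (rule sturm_letter_period[OF assms])
  then show ?thesis unfolding sturm_word_def by (simp add: rotate_periodic sturm_letter_shift)
qed

lemma inv_sturm_word:
  assumes "0 < P"
  shows "inv_word (sturm_word P q (2 * P * n) 0 0) = sturm_word P q (2 * P * n) 1 (q - 1)"
proof (rule nth_equalityI)
  fix k assume "k < length (inv_word (sturm_word P q (2 * P * n) 0 0))"
  then have k: "k < 2 * P * n" by (simp add: inv_word_def sturm_word_def)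
  define j where "j = 2 * P * n - Suc k"
  have lhs: "inv_word (sturm_word P q (2 * P * n) 0 0) ! k = inv_letter (sturm_letter P q 0 0 j)"
    using k unfolding j_def by (simp add: inv_word_def sturm_word_def rev_nth)
  have parity: "even j \<longleftrightarrow> even (k + 1)" using k unfolding j_def by (simp add: even_diff_nat)
  have "int j * q = - ((int k + 1) * q) + int P * (2 * int n * q)"
    using k unfolding j_def by (simp add: of_nat_diff algebra_simps)
  then have "(int j * q) div int P = 2 * int n * q + (- ((int k + 1) * q)) div int P"
    using assms by (simp only: div_mult_self2 of_nat_eq_0_iff)
  also have "\<dots> = 2 * int n * q - (int k * q + (q - 1)) div int P - 1"
    using assms floor_neg[of "int P" "(int k + 1) * q"] by (simp add: algebra_simps)
  finally have "odd ((int j * q) div int P) \<longleftrightarrow> even ((int k * q + (q - 1)) div int P)"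
    using odd_complement by simp
  then show "inv_word (sturm_word P q (2 * P * n) 0 0) ! k = sturm_word P q (2 * P * n) 1 (q - 1) ! k"
    unfolding lhs using k parity by (simp add: sturm_word_def sturm_letter_def inv_letter_def)
qed (simp add: inv_word_def sturm_word_def)

(* Symmetry of the base word about position P: this is why u_r, which is a letter a,
   then hat u_r, a middle letter, then the inverse of hat u_r, belongs to the family. *)
lemma sturm_letter_reflect:
  assumes "coprime q (int P)" "0 < i" "i < P"
  shows "sturm_letter P q 0 0 (P + i) = inv_letter (sturm_letter P q 0 0 (P - i))"
proof -
  have P: "0 < P" using assms by simp
  have right: "(int (P + i) * q) div int P = q + (int i * q) div int P"
    using P by (simp add: algebra_simps)
  have "int (P - i) * q = - (int i * q) + int P * q"
    using assms by (simp add: of_nat_diff algebra_simps)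
  then have "(int (P - i) * q) div int P = q + (- (int i * q)) div int P"
    using P by (simp only: div_mult_self2 of_nat_eq_0_iff)
  also have "\<dots> = 2 * q - (q + (int i * q) div int P) - 1"
    using P residue_nonzero[OF assms] by (simp add: zdiv_zminus1_eq_if)
  finally have left: "(int (P - i) * q) div int P = 2 * q - (q + (int i * q) div int P) - 1" .
  have "even ((int (P + i) * q) div int P) \<longleftrightarrow> odd ((int (P - i) * q) div int P)"
    unfolding right left odd_complement ..
  moreover have "even (P + i) \<longleftrightarrow> even (P - i)" using assms by (simp add: even_diff_nat)
  ultimately show ?thesis unfolding sturm_letter_def inv_letter_def by simp
qed

lemma inv_u_hat_segment:
  assumes "coprime q (int P)"
  shows "inv_word (map (sturm_letter P q 0 0) [1..<P]) = map (sturm_letter P q 0 0) [Suc P..<2 * P]"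
proof (rule nth_equalityI)
  fix j assume "j < length (inv_word (map (sturm_letter P q 0 0) [1..<P]))"
  then have j: "j < P - 1" by (simp add: inv_word_def)
  then have "inv_word (map (sturm_letter P q 0 0) [1..<P]) ! j = inv_letter (sturm_letter P q 0 0 (P - Suc j))"
    by (simp add: inv_word_def rev_nth Suc_diff_Suc)
  also have "\<dots> = sturm_letter P q 0 0 (P + Suc j)"
    using sturm_letter_reflect[OF assms, of "Suc j"] j by simp
  finally show "inv_word (map (sturm_letter P q 0 0) [1..<P]) ! j = map (sturm_letter P q 0 0) [Suc P..<2 * P] ! j"
    using j by simp
qed (simp add: inv_word_def)

lemma u_word_sturm:
  assumes "r_num r = q" "r_den r = int P" "2 \<le> P" "coprime q (int P)"
  shows "u_word r = sturm_word P q (2 * P) 0 0"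
proof -
  define f where "f = sturm_letter P q 0 0"
  have u_hat: "u_hat r = map f [1..<P]"
    unfolding u_hat_def f_def sturm_letter_def eps_def using assms(1,2) by (auto intro!: map_cong)
  have middle: "(if odd (r_den r) then (Gb, even (r_num r)) else (Ga, False)) = f P"
  proof (cases "even P")
    case True
    then have "odd q" using assms(4) by (metis coprime_common_divisor even_of_nat dvd_refl odd_one)
    then show ?thesis using True assms(1-3) unfolding f_def sturm_letter_def by simp
  qed (use assms(1-3) in \<open>simp add: f_def sturm_letter_def\<close>)
  have "[0..<2 * P] = [0..<P] @ [P..<2 * P]" by (metis upt_add_eq_append le0 le_add1 mult_2)
  also have "\<dots> = 0 # [1..<P] @ P # [Suc P..<2 * P]" using assms(3) by (simp add: upt_conv_Cons)
  finally have "[0..<2 * P] = 0 # [1..<P] @ P # [Suc P..<2 * P]" .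
  then have "map f [0..<2 * P] = [f 0] @ map f [1..<P] @ [f P] @ map f [Suc P..<2 * P]" by simp
  moreover have "f 0 = (Ga, True)" unfolding f_def sturm_letter_def by simp
  moreover have "u_word r = [(Ga, True)] @ map f [1..<P] @ [f P] @ inv_word (map f [1..<P])"
    unfolding u_word_def u_hat using middle by (auto split: if_splits)
  ultimately show ?thesis
    unfolding sturm_word_def f_def inv_u_hat_segment[OF assms(4)] by simp
qed

lemma word_pow_periodic:
  fixes f :: "nat \<Rightarrow> letter"
  assumes per: "\<And>k. f (k + L) = f k"
  shows "word_pow (map f [0..<L]) n = map f [0..<L * n]"
proof (induction n)
  case (Suc n)
  have "[0..<L * Suc n] = [0..<L] @ map (\<lambda>i. i + L) [0..<L * n]"
    by (simp add: map_add_upt upt_add_eq_append[of 0 L] add.commute)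
  then have "map f [0..<L * Suc n] = map f [0..<L] @ map f [0..<L * n]"
    by (simp add: per comp_def)
  then show ?case using Suc by (simp add: word_pow_def)
qed (simp add: word_pow_def)

lemma word_pow_sturm:
  assumes "0 < P"
  shows "word_pow (sturm_word P q (2 * P) 0 0) n = sturm_word P q (2 * P * n) 0 0"
  unfolding sturm_word_def
  using word_pow_periodic[of "sturm_letter P q 0 0" "2 * P"] sturm_letter_period[OF assms, of q 0 0 _ 1]
  by simp

lemma symmetrized_sturm:
  assumes "0 < P" "w \<in> symmetrized (sturm_word P q (2 * P * n) 0 0)"
  shows "\<exists>e \<theta>. w = sturm_word P q (2 * P * n) e \<theta>"
  using assms unfolding symmetrized_def by (auto simp: inv_sturm_word rotate_sturm_word)

(* Since the length is even, each such word starts and ends with different generators. *)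
lemma sturm_word_ends:
  assumes "0 < P" "0 < n"
  shows "sturm_word P q (2 * P * n) e \<theta> \<noteq> []
    \<and> fst (last (sturm_word P q (2 * P * n) e \<theta>)) \<noteq> fst (hd (sturm_word P q (2 * P * n) e \<theta>))"
proof -
  have N: "0 < 2 * P * n" using assms by simp
  then have "even (2 * P * n - 1 + e) \<longleftrightarrow> odd e" by (simp add: even_diff_nat)
  then show ?thesis using N unfolding sturm_word_def by (auto simp: last_map hd_map sturm_letter_def)
qed

(* Position k is a marker if the line y = (kq + theta)/P has just crossed an integer
   or is about to cross one. *)
definition marker :: "nat \<Rightarrow> int \<Rightarrow> int \<Rightarrow> nat \<Rightarrow> bool" where
  "marker P q \<theta> k \<longleftrightarrow> (int k * q + \<theta>) mod int P = 0 \<or> (int k * q + \<theta>) mod int P = int P - 1"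

lemma marker_shift: "marker P q (\<theta> + int s * q) k \<longleftrightarrow> marker P q \<theta> (k + s)"
  unfolding marker_def by (simp add: algebra_simps)

lemma markers_in_blocks:
  assumes "coprime q (int P)" "2 \<le> P"
  shows "2 * m \<le> card {k. k < P * m \<and> marker P q \<theta> k}"
proof (induction m)
  case (Suc m)
  define B where "B = {k. P * m \<le> k \<and> k < P * m + P \<and> marker P q \<theta> k}"
  have P0: "0 < P" using assms(2) by simp
  obtain k0 where k0: "P * m \<le> k0" "k0 < P * m + P" "(int k0 * q + \<theta>) mod int P = 0"
    using residue_in_window[OF assms(1) P0, of 0 "P * m" \<theta>] P0 by auto
  obtain k1 where k1: "P * m \<le> k1" "k1 < P * m + P" "(int k1 * q + \<theta>) mod int P = int P - 1"
    using residue_in_window[OF assms(1) P0, of "int P - 1" "P * m" \<theta>] P0 by auto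
  have "k0 \<noteq> k1" using k0(3) k1(3) assms(2) by auto
  moreover have "{k0, k1} \<subseteq> B" using k0 k1 unfolding B_def marker_def by auto
  moreover have "finite B" unfolding B_def by auto
  ultimately have "2 \<le> card B" using card_mono[of B "{k0, k1}"] by simp
  have "{k. k < P * Suc m \<and> marker P q \<theta> k} = {k. k < P * m \<and> marker P q \<theta> k} \<union> B"
    unfolding B_def by auto
  moreover have "card (\<dots>) = card {k. k < P * m \<and> marker P q \<theta> k} + card B"
    by (rule card_Un_disjoint) (auto simp: B_def)
  ultimately show ?case using Suc \<open>2 \<le> card B\<close> by simp
qed simp

lemma floor_diff_const:
  fixes p q :: int
  assumes p: "0 < p" "0 \<le> q" "q < p"
    and parity: "\<forall>i<l. even ((int i * q + t1) div p) = even ((int i * q + t2) div p)"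
    and "i < l"
  shows "(int i * q + t1) div p - (int i * q + t2) div p = t1 div p - t2 div p"
  using \<open>i < l\<close>
proof (induction i)
  case (Suc i)
  have step: "int (Suc i) * q + t = (int i * q + t) + q" for t by (simp add: algebra_simps)
  have unit_steps: "\<forall>A0 A1 B0 B1 :: int. A0 \<le> A1 \<and> A1 \<le> A0 + 1 \<and> B0 \<le> B1 \<and> B1 \<le> B0 + 1 \<and>
      even A0 = even B0 \<and> even A1 = even B1 \<longrightarrow> A1 - B1 = A0 - B0" by presburger
  have "even ((int i * q + t1) div p) = even ((int i * q + t2) div p)"
    "even ((int (Suc i) * q + t1) div p) = even ((int (Suc i) * q + t2) div p)"
    using parity Suc.prems Suc_lessD by blast+
  then have "(int (Suc i) * q + t1) div p - (int (Suc i) * q + t2) div p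
        = (int i * q + t1) div p - (int i * q + t2) div p"
    using unit_steps floor_step[OF p, of "int i * q + t1"] floor_step[OF p, of "int i * q + t2"]
    unfolding step by blast
  then show ?case using Suc by simp
qed simp


(* If the floors at a + t1 < a + t2 coincide, no integer lies in between: a + t1 is
   not just below a multiple of p and a + t2 is not a multiple of p. *)
lemma equal_floors_no_marker:
  fixes a p :: int
  assumes "0 < p" "t1 < t2" and same: "(a + t1) div p = (a + t2) div p"
  shows "(a + t1) mod p \<noteq> p - 1 \<and> (a + t2) mod p \<noteq> 0"
proof
  show "(a + t1) mod p \<noteq> p - 1"
  proof
    assume "(a + t1) mod p = p - 1"
    then have "a + t1 + 1 = p * ((a + t1) div p + 1)"
      unfolding distrib_left mult_1_right using mult_div_mod_eq[of p "a + t1"] by linarith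
    then have "(a + t1 + 1) div p = (a + t1) div p + 1" using assms(1) by simp
    moreover have "(a + t1 + 1) div p \<le> (a + t2) div p" by (rule zdiv_mono1) (use assms(1,2) in auto)
    ultimately show False using same by simp
  qed
  show "(a + t2) mod p \<noteq> 0"
  proof
    assume "(a + t2) mod p = 0"
    then have "a + t2 - 1 = (p - 1) + p * ((a + t2) div p - 1)"
      unfolding right_diff_distrib mult_1_right using mult_div_mod_eq[of p "a + t2"] by linarith
    then have "(a + t2 - 1) div p = (a + t2) div p - 1 + (p - 1) div p"
      using assms(1) by (simp only: div_mult_self2)
    then have "(a + t2 - 1) div p = (a + t2) div p - 1" using assms(1) by simp
    moreover have "(a + t1) div p \<le> (a + t2 - 1) div p" by (rule zdiv_mono1) (use assms(1,2) in auto)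
    ultimately show False using same by simp
  qed
qed

(* A different phase giving the same floors on [0, l) forbids one kind of marker
   there; but between two markers of the other kind the forbidden residue occurs. *)
lemma equal_floors_single_marker:
  assumes "2 \<le> P" "coprime q (int P)" "\<theta>' \<noteq> \<theta>"
    and floors: "\<forall>i<l. (int i * q + \<theta>') div int P = (int i * q + \<theta>) div int P"
    and "k1 < k2" "k2 < l" "marker P q \<theta> k1" "marker P q \<theta> k2"
  shows False
proof -
  have P: "0 < int P" "0 < P" "0 \<noteq> int P - 1" using assms(1) by auto
  have res: "(int k * q + \<theta>) mod int P = 0 \<or> (int k * q + \<theta>) mod int P = int P - 1"
    if "marker P q \<theta> k" for k using that unfolding marker_def .
  have k: "k1 < l" "k2 < l" using assms(5,6) by auto
  consider "\<theta>' < \<theta>" | "\<theta> < \<theta>'" using assms(3) by linarith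
  then show False
  proof cases
    case 1
    have avoid: "(int i * q + \<theta>) mod int P \<noteq> 0" if "i < l" for i
      using equal_floors_no_marker[OF P(1) 1 floors[rule_format, OF that]] by (rule conjunct2)
    then have "(int k1 * q + \<theta>) mod int P = int P - 1" "(int k2 * q + \<theta>) mod int P = int P - 1"
      using res[OF assms(7)] res[OF assms(8)] avoid[OF k(1)] avoid[OF k(2)] by auto
    then obtain k where "k1 < k" "k < k2" "(int k * q + \<theta>) mod int P = 0"
      using residue_between[OF assms(2) P(2) assms(5), of \<theta> 0] P by auto
    then show False using avoid[of k] assms(6) by simp
  next
    case 2
    have avoid: "(int i * q + \<theta>) mod int P \<noteq> int P - 1" if "i < l" for i
      using equal_floors_no_marker[OF P(1) 2 floors[rule_format, OF that, symmetric]] by (rule conjunct1)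
    then have "(int k1 * q + \<theta>) mod int P = 0" "(int k2 * q + \<theta>) mod int P = 0"
      using res[OF assms(7)] res[OF assms(8)] avoid[OF k(1)] avoid[OF k(2)] by auto
    then obtain k where "k1 < k" "k < k2" "(int k * q + \<theta>) mod int P = int P - 1"
      using residue_between[OF assms(2) P(2) assms(5), of \<theta> "int P - 1"] P by auto
    then show False using avoid[of k] assms(6) by simp
  qed
qed

lemma agreeing_letters_phase:
  assumes "0 < q" "q < int P" "0 < l"
    and agree: "\<forall>i<l. sturm_letter P q e1 \<theta>1 i = sturm_letter P q e2 \<theta>2 i"
  shows "even e1 = even e2 \<and>
    (\<exists>m. \<forall>i<l. (int i * q + \<theta>1) div int P = (int i * q + (\<theta>2 + 2 * int P * m)) div int P)"
proof
  show "even e1 = even e2"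
    using agree[rule_format, OF assms(3)] unfolding sturm_letter_def by (simp split: if_splits)
  have parity: "\<forall>i<l. even ((int i * q + \<theta>1) div int P) = even ((int i * q + \<theta>2) div int P)"
    using agree unfolding sturm_letter_def by simp
  define D where "D = \<theta>1 div int P - \<theta>2 div int P"
  have const: "(int i * q + \<theta>1) div int P = (int i * q + \<theta>2) div int P + D" if "i < l" for i
    using floor_diff_const[OF _ _ _ parity that] assms(1,2) unfolding D_def by simp
  have "even (\<theta>1 div int P) = even (\<theta>2 div int P)" using parity[rule_format, of 0] assms(3) by simp
  then have "even D" unfolding D_def by simp
  then obtain m where "D = 2 * m" by blast
  have "int i * q + (\<theta>2 + 2 * int P * m) = (int i * q + \<theta>2) + int P * D" for i
    using \<open>D = 2 * m\<close> by (simp add: algebra_simps)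
  then have "(int i * q + (\<theta>2 + 2 * int P * m)) div int P = (int i * q + \<theta>2) div int P + D" for i
    using assms(1,2) by (simp only: div_mult_self2 of_nat_eq_0_iff)
  then show "\<exists>m. \<forall>i<l. (int i * q + \<theta>1) div int P = (int i * q + (\<theta>2 + 2 * int P * m)) div int P"
    using const by (intro exI[of _ m]) simp
qed

lemma markers_rigid:
  assumes "2 \<le> P" "0 < q" "q < int P" "coprime q (int P)"
    and agree: "\<forall>i<l. sturm_letter P q e1 \<theta>1 i = sturm_letter P q e2 \<theta>2 i"
    and "k1 < k2" "k2 < l" "marker P q \<theta>2 k1" "marker P q \<theta>2 k2"
  shows "sturm_letter P q e1 \<theta>1 = sturm_letter P q e2 \<theta>2"
proof -
  obtain m where e: "even e1 = even e2"
    and floors: "\<forall>i<l. (int i * q + \<theta>1) div int P = (int i * q + (\<theta>2 + 2 * int P * m)) div int P"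
    using agreeing_letters_phase[OF assms(2,3) _ agree] assms(7) by auto
  have "int k * q + (\<theta>2 + 2 * int P * m) = (int k * q + \<theta>2) + (2 * m) * int P" for k
    by (simp add: algebra_simps)
  then have "marker P q (\<theta>2 + 2 * int P * m) k" if "marker P q \<theta>2 k" for k
    using that unfolding marker_def by (simp only: mod_mult_self1)
  then have "\<theta>1 = \<theta>2 + 2 * int P * m"
    using equal_floors_single_marker[OF assms(1,4) _ floors assms(6,7)] assms(8,9) by blast
  moreover have "(\<theta>2 + 2 * int P * m) mod (2 * int P) = \<theta>2 mod (2 * int P)"
    by (simp add: mult.commute[of _ m])
  ultimately show ?thesis using sturm_letter_cong[OF _ e] assms(1) by simp
qed

lemma segment_letters:
  assumes "x @ rest = drop s (sturm_word P q N e \<theta>)"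
  shows "length x \<le> N - s \<and> (\<forall>i<length x. x ! i = sturm_letter P q (e + s) (\<theta> + int s * q) i)"
proof
  show len: "length x \<le> N - s"
    using arg_cong[OF assms, of length] by (simp add: sturm_word_def)
  show "\<forall>i<length x. x ! i = sturm_letter P q (e + s) (\<theta> + int s * q) i"
  proof (intro allI impI)
    fix i assume "i < length x"
    then have "x ! i = sturm_word P q N e \<theta> ! (s + i)" "s + i < N"
      using len nth_append[of x rest i] assms by (simp_all add: sturm_word_def)
    then show "x ! i = sturm_letter P q (e + s) (\<theta> + int s * q) i"
      by (simp add: sturm_word_def sturm_letter_shift[symmetric] add.commute)
  qed
qed

lemma piece_single_marker:
  assumes "2 \<le> P" "0 < q" "q < int P" "coprime q (int P)"
    and piece: "piece (symmetrized (sturm_word P q (2 * P * n) 0 0)) x"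
    and x: "x @ rest = drop s (sturm_word P q (2 * P * n) e \<theta>)"
    and k: "s \<le> k1" "k1 < k2" "k2 < s + length x"
    and "marker P q \<theta> k1" "marker P q \<theta> k2"
  shows False
proof -
  obtain w1 w2 c1 c2 where w: "w1 \<in> symmetrized (sturm_word P q (2 * P * n) 0 0)"
      "w2 \<in> symmetrized (sturm_word P q (2 * P * n) 0 0)" "w1 \<noteq> w2" "w1 = x @ c1" "w2 = x @ c2"
    using piece unfolding piece_def by blast
  have P: "0 < P" using assms(1) by simp
  obtain e1 \<theta>1 e2 \<theta>2 where w1: "w1 = sturm_word P q (2 * P * n) e1 \<theta>1"
      and w2: "w2 = sturm_word P q (2 * P * n) e2 \<theta>2"
    using symmetrized_sturm[OF P w(1)] symmetrized_sturm[OF P w(2)] by blast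
  let ?e = "e + s" and ?\<theta> = "\<theta> + int s * q"
  have markers: "marker P q ?\<theta> (k1 - s)" "marker P q ?\<theta> (k2 - s)"
    using assms(10,11) k by (simp_all add: marker_shift)
  have common: "sturm_letter P q e' \<theta>' = sturm_letter P q ?e ?\<theta>"
    if "x @ c = sturm_word P q (2 * P * n) e' \<theta>'" for c e' \<theta>'
  proof (rule markers_rigid[OF assms(1-4) _ _ _ markers])
    have "x @ c = drop 0 (sturm_word P q (2 * P * n) e' \<theta>')" using that by simp
    then show "\<forall>i<length x. sturm_letter P q e' \<theta>' i = sturm_letter P q ?e ?\<theta> i"
      using segment_letters[OF x] segment_letters[of x c 0] by simp
  qed (use k in auto)
  then have "sturm_letter P q e1 \<theta>1 = sturm_letter P q e2 \<theta>2"
    using common[of c1 e1 \<theta>1] common[of c2 e2 \<theta>2] w(4,5) w1 w2 by simp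
  then show False using w(3) unfolding w1 w2 sturm_word_def by simp
qed

lemma segments_count:
  assumes single: "\<And>x rest s k1 k2. Q x \<Longrightarrow> x @ rest = drop s w \<Longrightarrow>
      s \<le> k1 \<Longrightarrow> k1 < k2 \<Longrightarrow> k2 < s + length x \<Longrightarrow> k1 \<in> M \<Longrightarrow> k2 \<in> M \<Longrightarrow> False"
    and M: "M \<subseteq> {..<length w}"
  shows "\<forall>x\<in>set ps. Q x \<Longrightarrow> concat ps = drop s w \<Longrightarrow> card {k\<in>M. s \<le> k} \<le> length ps"
proof (induction ps arbitrary: s)
  case Nil
  then have "{k\<in>M. s \<le> k} = {}" using M by auto
  then show ?case by (simp only: card.empty)
next
  case (Cons x ps)
  define A where "A = {k\<in>M. s \<le> k \<and> k < s + length x}"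
  have x: "x @ concat ps = drop s w" using Cons.prems(2) by simp
  then have "concat ps = drop (s + length x) w"
    by (metis append_eq_conv_conj drop_drop add.commute)
  then have rest: "card {k\<in>M. s + length x \<le> k} \<le> length ps" using Cons by simp
  have "finite M" using M finite_subset by blast
  have "finite A" unfolding A_def using \<open>finite M\<close> by simp
  moreover have "\<forall>k1\<in>A. \<forall>k2\<in>A. k1 = k2"
  proof (intro ballI)
    fix k1 k2 assume "k1 \<in> A" "k2 \<in> A"
    then show "k1 = k2"
      using single[OF _ x, of k1 k2] single[OF _ x, of k2 k1] Cons.prems(1)
      unfolding A_def by (cases k1 k2 rule: linorder_cases) auto
  qed
  ultimately have "card A \<le> 1" using card_le_Suc0_iff_eq by (metis One_nat_def)
  have "{k\<in>M. s \<le> k} \<subseteq> A \<union> {k\<in>M. s + length x \<le> k}" unfolding A_def by auto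
  then have "card {k\<in>M. s \<le> k} \<le> card (A \<union> {k\<in>M. s + length x \<le> k})"
    by (rule card_mono[rotated]) (use \<open>finite M\<close> in \<open>simp add: A_def\<close>)
  also have "\<dots> \<le> card A + card {k\<in>M. s + length x \<le> k}" by (rule card_Un_le)
  finally show ?case using \<open>card A \<le> 1\<close> rest by simp
qed

(* The condition C(4n): 2n blocks of length P give 4n markers. *)
lemma sturm_C_cond:
  assumes "2 \<le> P" "0 < q" "q < int P" "coprime q (int P)"
  shows "C_cond (4 * n) (symmetrized (sturm_word P q (2 * P * n) 0 0))"
  unfolding C_cond_def
proof (intro ballI allI impI)
  let ?R = "symmetrized (sturm_word P q (2 * P * n) 0 0)"
  fix w ps assume "w \<in> ?R" and ps: "w = concat ps \<and> (\<forall>x\<in>set ps. piece ?R x)"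
  obtain e \<theta> where w: "w = sturm_word P q (2 * P * n) e \<theta>"
    using symmetrized_sturm[OF _ \<open>w \<in> ?R\<close>] assms(1) by auto
  define M where "M = {k. k < 2 * P * n \<and> marker P q \<theta> k}"
  have "card {k\<in>M. 0 \<le> k} \<le> length ps"
  proof (rule segments_count)
    show "M \<subseteq> {..<length w}" unfolding M_def w sturm_word_def by auto
  next
    fix x rest s k1 k2
    assume "piece ?R x" "x @ rest = drop s w" "s \<le> k1" "k1 < k2" "k2 < s + length x" "k1 \<in> M" "k2 \<in> M"
    then show False using piece_single_marker[OF assms] unfolding w M_def by blast
  qed (use ps in simp_all)
  moreover have "2 * (2 * n) \<le> card M"
    using markers_in_blocks[OF assms(4,1), of "2 * n" \<theta>] unfolding M_def by (simp add: ac_simps)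
  ultimately show "4 * n \<le> length ps" by simp
qed

(* The condition T(4), i.e. for triples: with cancellation in every product, the
   first letters of the three relators would carry three distinct generators. *)
lemma sturm_T_cond:
  assumes "0 < P" "0 < n"
  shows "T_cond 4 (symmetrized (sturm_word P q (2 * P * n) 0 0))"
  unfolding T_cond_def
proof (intro allI impI)
  fix ws :: "word list"
  assume ws: "set ws \<subseteq> symmetrized (sturm_word P q (2 * P * n) 0 0) \<and> 3 \<le> length ws \<and> length ws < 4
    \<and> (\<forall>i<length ws. ws ! ((i + 1) mod length ws) \<noteq> inv_word (ws ! i))"
  then have len: "length ws = 3" by simp
  have ends: "ws ! i \<noteq> [] \<and> fst (last (ws ! i)) \<noteq> fst (hd (ws ! i))" if "i < 3" for i
  proof -
    have "ws ! i \<in> symmetrized (sturm_word P q (2 * P * n) 0 0)" using ws len that by auto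
    then obtain e \<theta> where "ws ! i = sturm_word P q (2 * P * n) e \<theta>"
      using symmetrized_sturm[OF assms(1)] by blast
    then show ?thesis using sturm_word_ends[OF assms] by simp
  qed
  show "\<exists>i<length ws. no_cancel (ws ! i) (ws ! ((i + 1) mod length ws))"
  proof (rule ccontr)
    assume "\<not> ?thesis"
    then have "fst (last (ws ! i)) = fst (hd (ws ! ((i + 1) mod 3)))" if "i < 3" for i
      using that len ends unfolding no_cancel_def inv_letter_def by auto
    then have "fst (hd (ws ! 1)) \<noteq> fst (hd (ws ! 0))" "fst (hd (ws ! 2)) \<noteq> fst (hd (ws ! 1))"
      "fst (hd (ws ! 0)) \<noteq> fst (hd (ws ! 2))"
      using ends[of 0] ends[of 1] ends[of 2] by (auto simp: numeral_2_eq_2)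
    then show False by (cases "fst (hd (ws ! 0))"; cases "fst (hd (ws ! 1))"; cases "fst (hd (ws ! 2))") auto
  qed
qed

lemma rat_lowest_terms:
  assumes "0 < r" "r < 1"
  obtains P where "r_den r = int P" "0 < r_num r" "r_num r < int P" "coprime (r_num r) (int P)"
proof -
  obtain q p where qp: "quotient_of r = (q, p)" by (cases "quotient_of r")
  have p: "0 < p" and "coprime q p" and r: "r = of_int q / of_int p"
    using quotient_of_denom_pos[OF qp] quotient_of_coprime[OF qp] quotient_of_div[OF qp] by auto
  have "0 < q" "q < p" using assms p unfolding r by (simp_all add: zero_less_divide_iff divide_less_eq)
  then show thesis using that[of "nat p"] p \<open>coprime q p\<close> unfolding r_num_def r_den_def qp by simp
qed

theorem mainTheorem6:
  fixes r :: rat and n :: nat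
  assumes "0 < r" and "r < 1" and "2 \<le> n"
  shows "C_cond (4 * n) (symmetrized (word_pow (u_word r) n))
       \<and> T_cond 4 (symmetrized (word_pow (u_word r) n))"
proof -
  obtain P where P: "r_den r = int P" "0 < r_num r" "r_num r < int P" "coprime (r_num r) (int P)"
    using rat_lowest_terms[OF assms(1,2)] by blast
  then have "2 \<le> P" by linarith
  then have "word_pow (u_word r) n = sturm_word P (r_num r) (2 * P * n) 0 0"
    using u_word_sturm[OF refl P(1) _ P(4)] word_pow_sturm by simp
  then show ?thesis
    using sturm_C_cond[OF \<open>2 \<le> P\<close> P(2-4)] sturm_T_cond[of P n] \<open>2 \<le> P\<close> assms(3) by simp
qed

end
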